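(* Consider the network and loss from the context. Let $\overline{\mathbf{P}}$ be a stationary point, let $i_0\in I$, and let $\overline{\mathbf{P}}'$ be obtained from $\overline{\mathbf{P}}$ by unit replication of neuron $i_0$ with coefficients $(\beta_l,\gamma_l)_{l\in L}$ (so $\beta_l>0$ and $\sum_{l\in L}\beta_l\gamma_l=1$). Then $\overline{\mathbf{P}}'$ is a stationary point of the loss of the widened network if and only if at least one of the following holds: (1) every tangential derivative of $\mathcal{L}$ with respect to $\mathbf{w}_{i_0}$ at $\overline{\mathbf{P}}$ equals $0$, i.e. $\sum_{j\in J}\overline{h}_{ji_0}\mathbf{d}_{ji_0}^{\mathbf{v}}\cdot\mathbf{v}=0$ for every tangential direction $\mathbf{v}$ of $\overline{\mathbf{w}}_{i_0}$; (2) $\gamma_l\ge0$ for all $l\in L$. Moreover, if $\overline{\mathbf{P}}$ is a type-1 local minimum, then $\overline{\mathbf{P}}'$ is a type-1 local minimum of the loss of the widened network if and only if at least one of the following holds: (1) every tangential derivative of $\mathcal{L}$ with respect to $\mathbf{w}_{i_0}$ at $\overline{\mathbf{P}}$ equals $0$; (2) $\gamma_l>0$ for all $l\in L$.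
   Context: Fix an integer $d>1$, finite index sets $I$ (hidden), $J$ (output), $K$ (samples), reals $\alpha^+\neq\alpha^-$, $\rho(z)=\alpha^+z$ for $z\ge0$, $\rho(z)=\alpha^-z$ for $z<0$ (componentwise). Parameters $\mathbf{P}$ consist of input weights $\mathbf{w}_i\in\mathbb{R}^d$ and output weights $h_{ji}$ ($i\in I$, $j\in J$); output $\hat{\mathbf{y}}(\mathbf{P};\mathbf{x})_j=\sum_{i\in I}h_{ji}\rho(\mathbf{w}_i\cdot\mathbf{x})$; training data $(\mathbf{x}_k,\mathbf{y}_k)_{k\in K}$; loss $\mathcal{L}(\mathbf{P})=\frac12\sum_k\|\hat{\mathbf{y}}(\mathbf{P};\mathbf{x}_k)-\mathbf{y}_k\|^2$; $e_{kj}=\hat y_{kj}-y_{kj}$. The same definitions apply to a network with any finite hidden index set. Stationary point: $\overline{\mathbf{P}}$ with $\lim_{\alpha\to0^+}\frac{\mathcal{L}(\overline{\mathbf{P}}+\alpha\mathbf{d})-\mathcal{L}(\overline{\mathbf{P}})}{\alpha}\ge0$ for all directions $\mathbf{d}$. Tangential directions of $\mathbf{w}_i$: unit vectors orthogonal to $\mathbf{w}_i$ if $\mathbf{w}_i\ne\mathbf{0}$; any unit vector if $\mathbf{w}_i=\mathbf{0}$. For a tangential direction $\mathbf{v}$, $\mathbf{d}_{ji}^{\mathbf{v}}=\lim_{\Delta\to0^+}\big(\sum_{k:(\mathbf{w}_i+\Delta\mathbf{v})\cdot\mathbf{x}_k>0}\alpha^+e_{kj}\mathbf{x}_k+\sum_{k:(\mathbf{w}_i+\Delta\mathbf{v})\cdot\mathbf{x}_k<0}\alpha^-e_{kj}\mathbf{x}_k\big)$,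 and the tangential derivative $\lim_{\Delta\to0^+}\frac{\mathcal{L}(\ldots,\mathbf{w}_i+\Delta\mathbf{v},\ldots)-\mathcal{L}(\ldots,\mathbf{w}_i,\ldots)}{\Delta}$ equals $\sum_{j}h_{ji}\mathbf{d}_{ji}^{\mathbf{v}}\cdot\mathbf{v}$. Escape neuron: at a stationary point, hidden neuron $i$ is an escape neuron iff there exist $j'\in J$ and a tangential direction $\mathbf{v}$ of $\mathbf{w}_i$ with $\sum_{j}h_{ji}\mathbf{d}_{ji}^{\mathbf{v}}\cdot\mathbf{v}=0$ and $\mathbf{d}_{j'i}^{\mathbf{v}}\cdot\mathbf{v}\ne0$. A type-1 local minimum is a local minimum of the loss (a stationary point) at which no hidden neuron is an escape neuron. Unit replication: given $\mathbf{P}$ and $i_0\in I$, replace neuron $i_0$ by a finite set of new hidden neurons $\{i_0^l: l\in L\}$ with $\mathbf{w}_{i_0^l}=\beta_l\mathbf{w}_{i_0}$ and $h_{ji_0^l}=\gamma_lh_{ji_0}$ for all $j\in J$, where $\beta_l>0$ for all $l$ and $\sum_{l\in L}\beta_l\gamma_l=1$; all other neurons are unchanged. This preserves the network function. *)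

theory Defs
  imports "HOL-Analysis.Analysis"
begin

definition rho :: "real \<Rightarrow> real \<Rightarrow> real \<Rightarrow> real" where
  "rho ap am z = (if z \<ge> 0 then ap * z else am * z)"

definition out :: "real \<Rightarrow> real \<Rightarrow> 'h set \<Rightarrow> ('h \<Rightarrow> real^'d) \<Rightarrow> ('j \<Rightarrow> 'h \<Rightarrow> real)
                   \<Rightarrow> real^'d \<Rightarrow> 'j \<Rightarrow> real" where
  "out ap am H w h xx j = (\<Sum>i\<in>H. h j i * rho ap am (w i \<bullet> xx))"

definition err :: "real \<Rightarrow> real \<Rightarrow> ('k \<Rightarrow> real^'d) \<Rightarrow> ('k \<Rightarrow> 'j \<Rightarrow> real) \<Rightarrow> 'h set
                   \<Rightarrow> ('h \<Rightarrow> real^'d) \<Rightarrow> ('j \<Rightarrow> 'h \<Rightarrow> real) \<Rightarrow> 'k \<Rightarrow> 'j \<Rightarrow> real" where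
  "err ap am x y H w h k j = out ap am H w h (x k) j - y k j"

definition loss :: "real \<Rightarrow> real \<Rightarrow> ('k \<Rightarrow> real^'d) \<Rightarrow> ('k \<Rightarrow> 'j \<Rightarrow> real) \<Rightarrow> 'k set \<Rightarrow> 'j set
                    \<Rightarrow> 'h set \<Rightarrow> ('h \<Rightarrow> real^'d) \<Rightarrow> ('j \<Rightarrow> 'h \<Rightarrow> real) \<Rightarrow> real" where
  "loss ap am x y K J H w h = (1/2) * (\<Sum>k\<in>K. \<Sum>j\<in>J. (err ap am x y H w h k j)\<^sup>2)"

definition stationary where
  "stationary ap am x y K J H w h \<longleftrightarrow>
     (\<forall>(dw :: 'h \<Rightarrow> real^'d) (dh :: 'j \<Rightarrow> 'h \<Rightarrow> real). \<exists>D\<ge>0.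
        ((\<lambda>\<alpha>. (loss ap am x y K J H (\<lambda>i. w i + \<alpha> *\<^sub>R dw i) (\<lambda>j i. h j i + \<alpha> * dh j i)
                 - loss ap am x y K J H w h) / \<alpha>) \<longlongrightarrow> D) (at_right 0))"

definition local_min where
  "local_min ap am x y K J H w h \<longleftrightarrow>
     (\<exists>\<epsilon>>0. \<forall>(w' :: 'h \<Rightarrow> real^'d) (h' :: 'j \<Rightarrow> 'h \<Rightarrow> real).
        (\<forall>i\<in>H. norm (w' i - w i) < \<epsilon>) \<and> (\<forall>j\<in>J. \<forall>i\<in>H. \<bar>h' j i - h j i\<bar> < \<epsilon>)
        \<longrightarrow> loss ap am x y K J H w h \<le> loss ap am x y K J H w' h')"

definition tangential :: "real^'d \<Rightarrow> real^'d \<Rightarrow> bool" where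
  "tangential wi v \<longleftrightarrow> norm v = 1 \<and> (wi \<noteq> 0 \<longrightarrow> wi \<bullet> v = 0)"

definition dvec where
  "dvec ap am x y K J H w h i j (v :: real^'d) = Lim (at_right (0::real))
     (\<lambda>\<Delta>. (\<Sum>k\<in>{k\<in>K. (w i + \<Delta> *\<^sub>R v) \<bullet> x k > 0}. (ap * err ap am x y H w h k j) *\<^sub>R x k)
         + (\<Sum>k\<in>{k\<in>K. (w i + \<Delta> *\<^sub>R v) \<bullet> x k < 0}. (am * err ap am x y H w h k j) *\<^sub>R x k))"

definition tderiv where
  "tderiv ap am x y K J H w h i v = (\<Sum>j\<in>J. h j i * (dvec ap am x y K J H w h i j v \<bullet> v))"

definition escape where
  "escape ap am x y K J H w h i \<longleftrightarrow>
     (\<exists>j'\<in>J. \<exists>v. tangential (w i) v \<and> tderiv ap am x y K J H w h i v = 0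
                 \<and> dvec ap am x y K J H w h i j' v \<bullet> v \<noteq> 0)"

definition type1_min where
  "type1_min ap am x y K J H w h \<longleftrightarrow>
     local_min ap am x y K J H w h \<and> stationary ap am x y K J H w h \<and>
     (\<forall>i\<in>H. \<not> escape ap am x y K J H w h i)"

definition repH :: "'i set \<Rightarrow> 'i \<Rightarrow> 'l set \<Rightarrow> ('i + 'l) set" where
  "repH I i0 L = Inl ` (I - {i0}) \<union> Inr ` L"

definition repw :: "('i \<Rightarrow> real^'d) \<Rightarrow> 'i \<Rightarrow> ('l \<Rightarrow> real) \<Rightarrow> ('i + 'l) \<Rightarrow> real^'d" where
  "repw w i0 \<beta> = case_sum w (\<lambda>l. \<beta> l *\<^sub>R w i0)"

definition reph :: "('j \<Rightarrow> 'i \<Rightarrow> real) \<Rightarrow> 'i \<Rightarrow> ('l \<Rightarrow> real) \<Rightarrow> 'j \<Rightarrow> ('i + 'l) \<Rightarrow> real" where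
  "reph h i0 \<gamma> j = case_sum (h j) (\<lambda>l. \<gamma> l * h j i0)"

end

theory Submission
  imports Defs
begin

text \<open>
  Because the activation is positively homogeneous and piecewise linear, the loss has a one-sided
  directional derivative, linear in the output weights and piecewise linear in the input weights,
  and for small perturbations of the weights the first-order formula for the outputs is exact.
  Stationarity therefore splits neuron-wise: the gradient in the output weights vanishes and the
  derivative \<open>F\<^sub>i(u) = \<Sum>\<^sub>j h\<^sub>j\<^sub>i \<Phi>\<^sub>j\<^sub>i(u)\<close> in the direction \<open>u\<close> of \<open>w\<^sub>i\<close> is nonnegative.
  Its radial part is a multiple of the vanishing output gradient, so \<open>F\<^sub>i\<close> vanishes identically
  iff all tangential derivatives vanish.

  Replication leaves the network function, hence the errors, unchanged. The copy \<open>l\<close> of \<open>i\<^sub>0\<close>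
  then has output gradient \<open>\<beta>\<^sub>l\<close> times that of \<open>i\<^sub>0\<close>, i.e. zero, and directional derivative
  \<open>\<gamma>\<^sub>l F\<^sub>i\<^sub>0\<close>, which is nonnegative for all \<open>l\<close> iff \<open>F\<^sub>i\<^sub>0 = 0\<close> or all \<open>\<gamma>\<^sub>l \<ge> 0\<close>. A copy with
  \<open>\<gamma>\<^sub>l = 0\<close> is an escape neuron exactly when \<open>F\<^sub>i\<^sub>0 \<noteq> 0\<close>; the other copies escape iff \<open>i\<^sub>0\<close> does.

  Finally, stationarity without escape neurons already gives a local minimum: \<open>F\<^sub>i = 0\<close> then forces
  all \<open>\<Phi>\<^sub>j\<^sub>i = 0\<close>, and since space splits into finitely many polyhedral cones on which \<open>F\<^sub>i\<close> and
  the \<open>\<Phi>\<^sub>j\<^sub>i\<close> are linear, this yields \<open>\<bar>\<Phi>\<^sub>j\<^sub>i\<bar> \<le> M F\<^sub>i\<close>. Near the stationary point the loss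
  increment is at least \<open>\<Sum>\<^sub>i (F\<^sub>i + \<Sum>\<^sub>j (h'\<^sub>j\<^sub>i - h\<^sub>j\<^sub>i) \<Phi>\<^sub>j\<^sub>i)\<close>, which this bound keeps nonnegative.
\<close>

section \<open>Linear functionals on polyhedral cones\<close>

lemma closed_cone_linear_lower_bound:
  fixes a :: "'a::euclidean_space"
  assumes "closed C" "cone C" and pos: "\<And>u. u \<in> C \<Longrightarrow> u \<noteq> 0 \<Longrightarrow> 0 < a \<bullet> u"
  shows "\<exists>m>0. \<forall>u\<in>C. m * norm u \<le> a \<bullet> u"
proof (cases "C \<inter> sphere 0 1 = {}")
  case True
  have "u = 0" if "u \<in> C" for u
  proof (rule ccontr)
    assume "u \<noteq> 0"
    then have "(1 / norm u) *\<^sub>R u \<in> C \<inter> sphere 0 1"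
      using \<open>cone C\<close> that by (simp add: cone_def)
    then show False using True by blast
  qed
  then show ?thesis by (intro exI[of _ 1]) force
next
  case False
  have "compact (C \<inter> sphere 0 1)"
    using assms(1) by (simp add: closed_Int_compact)
  moreover have "continuous_on (C \<inter> sphere 0 1) (\<lambda>v. a \<bullet> v)"
    by (intro continuous_intros)
  ultimately obtain s where s: "s \<in> C \<inter> sphere 0 1"
    and min: "\<And>v. v \<in> C \<inter> sphere 0 1 \<Longrightarrow> a \<bullet> s \<le> a \<bullet> v"
    using continuous_attains_inf[OF _ False] by blast
  have "a \<bullet> s * norm u \<le> a \<bullet> u" if "u \<in> C" for u
  proof (cases "u = 0")
    case False
    then have "(1 / norm u) *\<^sub>R u \<in> C \<inter> sphere 0 1"
      using \<open>cone C\<close> that by (simp add: cone_def)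
    then have "a \<bullet> s \<le> (a \<bullet> u) / norm u"
      using min by fastforce
    then show ?thesis
      using False by (simp add: pos_le_divide_eq)
  qed simp
  moreover have "0 < a \<bullet> s"
    using s pos by force
  ultimately show ?thesis by blast
qed

lemma small_step_stays_in_cone:
  fixes p s :: "'a::real_inner"
  assumes "finite K" "\<forall>k\<in>K. 0 \<le> b k \<bullet> p" "\<forall>k\<in>K. b k \<bullet> p = 0 \<longrightarrow> 0 \<le> b k \<bullet> s"
  shows "\<exists>t>0. \<forall>k\<in>K. 0 \<le> b k \<bullet> (p + t *\<^sub>R s)"
proof -
  have "eventually (\<lambda>t. 0 \<le> b k \<bullet> (p + t *\<^sub>R s)) (at_right 0)" if "k \<in> K" for k
  proof (cases "b k \<bullet> p = 0")
    case True
    then show ?thesis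
      using assms(3) that eventually_at_right_less[of 0]
      by (auto elim!: eventually_mono simp: inner_add_right)
  next
    case False
    then have "0 < b k \<bullet> p" using assms(2) that by fastforce
    moreover have "((\<lambda>t. b k \<bullet> (p + t *\<^sub>R s)) \<longlongrightarrow> b k \<bullet> p) (at_right 0)"
      by (auto intro!: tendsto_eq_intros simp: inner_add_right)
    ultimately show ?thesis
      by (auto dest: order_tendstoD(1) elim!: eventually_mono)
  qed
  then have "eventually (\<lambda>t. 0 < t \<and> (\<forall>k\<in>K. 0 \<le> b k \<bullet> (p + t *\<^sub>R s))) (at_right 0)"
    using assms(1) by (intro eventually_conj eventually_at_right_less eventually_ball_finite) auto
  then show ?thesis
    using eventually_happens'[OF trivial_limit_at_right_real] by blast
qed

lemma polyhedral_cone_domination: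
  fixes a c :: "'a::euclidean_space" and b :: "'k \<Rightarrow> 'a"
  assumes "subspace V" "finite K"
    and "\<And>u. u \<in> V \<Longrightarrow> \<forall>k\<in>K. 0 \<le> b k \<bullet> u \<Longrightarrow> 0 \<le> a \<bullet> u"
    and "\<And>u. u \<in> V \<Longrightarrow> \<forall>k\<in>K. 0 \<le> b k \<bullet> u \<Longrightarrow> a \<bullet> u = 0 \<Longrightarrow> c \<bullet> u = 0"
  shows "\<exists>M. \<forall>u\<in>V. (\<forall>k\<in>K. 0 \<le> b k \<bullet> u) \<longrightarrow> \<bar>c \<bullet> u\<bar> \<le> M * (a \<bullet> u)"
  using assms
proof (induction "dim V" arbitrary: V K rule: less_induct)
  case less
  note V = \<open>subspace V\<close> and nonneg = less.prems(3) and zero = less.prems(4)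
  show ?case
  proof (cases "\<exists>p\<in>V. (\<forall>k\<in>K. 0 \<le> b k \<bullet> p) \<and> p \<noteq> 0 \<and> a \<bullet> p = 0")
    case False
    define C where "C = V \<inter> (\<Inter>k\<in>K. {u. 0 \<le> b k \<bullet> u})"
    have "closed C"
      unfolding C_def using V by (intro closed_Int closed_INT ballI closed_halfspace_ge closed_subspace)
    moreover have "cone C"
      unfolding C_def cone_def using V by (auto simp: subspace_scale inner_scaleR_right)
    moreover have "0 < a \<bullet> u" if "u \<in> C" "u \<noteq> 0" for u
      using False nonneg that unfolding C_def by force
    ultimately obtain m where "m > 0" and m: "\<forall>u\<in>C. m * norm u \<le> a \<bullet> u"
      using closed_cone_linear_lower_bound by blast
    have "\<bar>c \<bullet> u\<bar> \<le> norm c / m * (a \<bullet> u)" if "u \<in> C" for u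
    proof -
      have "\<bar>c \<bullet> u\<bar> \<le> norm c * norm u"
        by (rule Cauchy_Schwarz_ineq2)
      also have "\<dots> \<le> norm c / m * (a \<bullet> u)"
        using m that \<open>m > 0\<close> mult_left_mono[of "m * norm u" "a \<bullet> u" "norm c"]
        by (simp add: field_simps)
      finally show ?thesis .
    qed
    then show ?thesis
      unfolding C_def by blast
  next
    case True
    then obtain p where p: "p \<in> V" "\<forall>k\<in>K. 0 \<le> b k \<bullet> p" "p \<noteq> 0" "a \<bullet> p = 0"
      by blast
    have "c \<bullet> p = 0"
      using zero p by blast
    \<comment> \<open>Project along \<open>p\<close>, which changes neither \<open>a\<close> nor \<open>c\<close>, onto the hyperplane orthogonal
      to \<open>p\<close>, keeping only the constraints active at \<open>p\<close>: near \<open>p\<close> the cone looks like this one.\<close>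
    define V' where "V' = V \<inter> {s. p \<bullet> s = 0}"
    define K' where "K' = {k\<in>K. b k \<bullet> p = 0}"
    have V': "subspace V'"
      unfolding V'_def by (intro subspace_inter V subspace_hyperplane)
    have "p \<notin> V'"
      using p unfolding V'_def by auto
    then have "V' \<subset> V"
      using p unfolding V'_def by blast
    then have "dim V' < dim V"
      using V V' by (metis dim_psubset span_eq_iff)
    have shift: "\<exists>t>0. p + t *\<^sub>R s \<in> V \<and> (\<forall>k\<in>K. 0 \<le> b k \<bullet> (p + t *\<^sub>R s))"
      if "s \<in> V'" "\<forall>k\<in>K'. 0 \<le> b k \<bullet> s" for s
      using small_step_stays_in_cone[OF \<open>finite K\<close> p(2), of s] that p(1) V
      unfolding V'_def K'_def by (auto intro: subspace_add subspace_scale)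
    have "\<exists>M. \<forall>s\<in>V'. (\<forall>k\<in>K'. 0 \<le> b k \<bullet> s) \<longrightarrow> \<bar>c \<bullet> s\<bar> \<le> M * (a \<bullet> s)"
    proof (rule less.hyps[OF \<open>dim V' < dim V\<close> V'])
      show "finite K'"
        unfolding K'_def using \<open>finite K\<close> by simp
    next
      fix s assume "s \<in> V'" "\<forall>k\<in>K'. 0 \<le> b k \<bullet> s"
      then obtain t where "t > 0" "p + t *\<^sub>R s \<in> V" "\<forall>k\<in>K. 0 \<le> b k \<bullet> (p + t *\<^sub>R s)"
        using shift by blast
      then have "0 \<le> a \<bullet> (p + t *\<^sub>R s)" and "a \<bullet> (p + t *\<^sub>R s) = 0 \<Longrightarrow> c \<bullet> (p + t *\<^sub>R s) = 0"
        using nonneg zero by auto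
      then show "0 \<le> a \<bullet> s" and "a \<bullet> s = 0 \<Longrightarrow> c \<bullet> s = 0"
        using \<open>t > 0\<close> p(4) \<open>c \<bullet> p = 0\<close> by (auto simp: inner_add_right zero_le_mult_iff)
    qed
    then obtain M where M: "\<forall>s\<in>V'. (\<forall>k\<in>K'. 0 \<le> b k \<bullet> s) \<longrightarrow> \<bar>c \<bullet> s\<bar> \<le> M * (a \<bullet> s)"
      by blast
    have "\<bar>c \<bullet> u\<bar> \<le> M * (a \<bullet> u)" if u: "u \<in> V" "\<forall>k\<in>K. 0 \<le> b k \<bullet> u" for u
    proof -
      define s where "s = u - ((p \<bullet> u) / (p \<bullet> p)) *\<^sub>R p"
      have "s \<in> V'"
        unfolding s_def V'_def using u p V by (auto intro: subspace_diff subspace_scale simp: inner_diff_right)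
      moreover have "\<forall>k\<in>K'. 0 \<le> b k \<bullet> s"
        unfolding s_def K'_def using u by (auto simp: inner_diff_right)
      moreover have "c \<bullet> s = c \<bullet> u" "a \<bullet> s = a \<bullet> u"
        unfolding s_def using p(4) \<open>c \<bullet> p = 0\<close> by (auto simp: inner_diff_right)
      ultimately show ?thesis
        using M by fastforce
    qed
    then show ?thesis by blast
  qed
qed

lemma finite_common_multiplier:
  assumes "finite A" "\<And>a. a \<in> A \<Longrightarrow> \<exists>M. \<forall>u\<in>C a. f a u \<le> M * g a u"
    and "\<And>a u. a \<in> A \<Longrightarrow> u \<in> C a \<Longrightarrow> 0 \<le> g a u"
  shows "\<exists>M. \<forall>a\<in>A. \<forall>u\<in>C a. f a u \<le> M * (g a u :: real)"
  using assms(1,2,3)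
proof (induction A rule: finite_induct)
  case (insert a A)
  obtain M1 where M1: "\<forall>u\<in>C a. f a u \<le> M1 * g a u"
    using insert.prems by blast
  obtain M2 where M2: "\<forall>b\<in>A. \<forall>u\<in>C b. f b u \<le> M2 * g b u"
    using insert.IH insert.prems by blast
  show ?case
  proof (intro exI[of _ "max M1 M2"] ballI)
    fix b u assume "b \<in> insert a A" "u \<in> C b"
    then have "f b u \<le> M1 * g b u \<or> f b u \<le> M2 * g b u"
      using M1 M2 by blast
    moreover have "M1 * g b u \<le> max M1 M2 * g b u" "M2 * g b u \<le> max M1 M2 * g b u"
      using insert.prems(2)[OF \<open>b \<in> insert a A\<close> \<open>u \<in> C b\<close>] by (auto intro: mult_right_mono)
    ultimately show "f b u \<le> max M1 M2 * g b u"
      by linarith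
  qed
qed simp

section \<open>The activation and its one-sided derivative\<close>

text \<open>\<open>rho_dir ap am z t\<close> is the one-sided derivative of \<open>rho ap am\<close> at \<open>z\<close> in direction \<open>t\<close>.\<close>

definition rho_dir :: "real \<Rightarrow> real \<Rightarrow> real \<Rightarrow> real \<Rightarrow> real" where
  "rho_dir ap am z t = (if z > 0 then ap * t else if z < 0 then am * t else rho ap am t)"

lemma rho_of_nonneg: "0 \<le> s \<Longrightarrow> rho ap am s = ap * s"
  and rho_of_nonpos: "s \<le> 0 \<Longrightarrow> rho ap am s = am * s"
  by (auto simp: rho_def)

lemma rho_add_rho_dir:
  assumes "z \<noteq> 0 \<Longrightarrow> \<bar>t\<bar> \<le> \<bar>z\<bar>"
  shows "rho ap am (z + t) = rho ap am z + rho_dir ap am z t"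
  using assms by (cases z "0::real" rule: linorder_cases)
    (auto simp: rho_of_nonneg rho_of_nonpos rho_dir_def algebra_simps)

lemma rho_scale_nonneg: "0 \<le> c \<Longrightarrow> rho ap am (c * t) = c * rho ap am t"
  by (auto simp: rho_def zero_le_mult_iff mult_le_0_iff)

lemma rho_dir_scale_nonneg: "0 \<le> c \<Longrightarrow> rho_dir ap am z (c * t) = c * rho_dir ap am z t"
  by (simp add: rho_dir_def rho_scale_nonneg)

lemma rho_dir_scale_base: "0 < b \<Longrightarrow> rho_dir ap am (b * z) t = rho_dir ap am z t"
  by (simp add: rho_dir_def zero_less_mult_iff mult_less_0_iff)

lemma rho_dir_add_radial: "rho_dir ap am z (a * z + t) = a * rho ap am z + rho_dir ap am z t"
  by (simp add: rho_dir_def rho_def algebra_simps)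

lemma rho_dir_zero [simp]: "rho_dir ap am z 0 = 0"
  by (simp add: rho_dir_def rho_def)

lemma rho_dir_eq_slope:
  assumes "s \<Longrightarrow> 0 \<le> t" "\<not> s \<Longrightarrow> t \<le> 0"
  shows "rho_dir ap am z t = (if z > 0 then ap else if z < 0 then am else if s then ap else am) * t"
  using assms by (auto simp: rho_dir_def rho_def)

lemma eventually_sign_perturbation:
  "eventually (\<lambda>\<Delta>. (0 < z + \<Delta> * t \<longleftrightarrow> 0 < z \<or> z = 0 \<and> 0 < t)
      \<and> (z + \<Delta> * t < 0 \<longleftrightarrow> z < 0 \<or> z = 0 \<and> t < 0)) (at_right (0::real))"
proof (cases "z = 0")
  case True
  then show ?thesis
    using eventually_at_right_less[of 0]
    by (auto elim!: eventually_mono simp: zero_less_mult_iff mult_less_0_iff)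
next
  case False
  have "((\<lambda>\<Delta>. \<bar>\<Delta> * t\<bar>) \<longlongrightarrow> 0) (at_right 0)"
    by (auto intro!: tendsto_eq_intros)
  then have "eventually (\<lambda>\<Delta>. \<bar>\<Delta> * t\<bar> < \<bar>z\<bar>) (at_right 0)"
    using False by (auto intro: order_tendstoD)
  then show ?thesis
    using False by (auto elim!: eventually_mono simp: abs_if split: if_splits)
qed

lemma rho_dir_sum_linear_on_sign_cone:
  fixes x :: "'k \<Rightarrow> 'a::euclidean_space"
  shows "\<exists>A. \<forall>u. (\<forall>k\<in>K. 0 \<le> (if k \<in> S then x k else - x k) \<bullet> u) \<longrightarrow>
           (\<Sum>k\<in>K. c k * rho_dir ap am (z k) (u \<bullet> x k)) = A \<bullet> u"
proof -
  define slope where "slope k = (if z k > 0 then ap else if z k < 0 then am else if k \<in> S then ap else am)" for k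
  have "(\<Sum>k\<in>K. c k * rho_dir ap am (z k) (u \<bullet> x k)) = (\<Sum>k\<in>K. (c k * slope k) *\<^sub>R x k) \<bullet> u"
    if cone: "\<forall>k\<in>K. 0 \<le> (if k \<in> S then x k else - x k) \<bullet> u" for u
  proof -
    have "rho_dir ap am (z k) (u \<bullet> x k) = slope k * (u \<bullet> x k)" if "k \<in> K" for k
      unfolding slope_def
      by (rule rho_dir_eq_slope[where s = "k \<in> S"]) (use cone that in \<open>auto simp: inner_commute\<close>)
    then show ?thesis
      by (simp add: inner_commute inner_sum_right mult.assoc)
  qed
  then show ?thesis by blast
qed

lemma rho_dir_sums_domination:
  fixes x :: "'k \<Rightarrow> 'a::euclidean_space" and c :: "'j \<Rightarrow> 'k \<Rightarrow> real" and z :: "'k \<Rightarrow> real"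
    and K :: "'k set" and ap am :: real
  defines "P j u \<equiv> \<Sum>k\<in>K. c j k * rho_dir ap am (z k) (u \<bullet> x k)"
  assumes "finite K" "finite J"
    and nonneg: "\<And>u. 0 \<le> (\<Sum>j\<in>J. g j * P j u)"
    and zero: "\<And>u j. (\<Sum>j\<in>J. g j * P j u) = 0 \<Longrightarrow> j \<in> J \<Longrightarrow> P j u = 0"
  shows "\<exists>M. \<forall>u. \<forall>j\<in>J. \<bar>P j u\<bar> \<le> M * (\<Sum>j\<in>J. g j * P j u)"
proof -
  define F where "F u = (\<Sum>j\<in>J. g j * P j u)" for u
  define b where "b S k = (if k \<in> S then x k else - x k)" for S k
  define cone where "cone S = {u. \<forall>k\<in>K. 0 \<le> b S k \<bullet> u}" for S
  have F_eq: "F u = (\<Sum>k\<in>K. (\<Sum>j\<in>J. g j * c j k) * rho_dir ap am (z k) (u \<bullet> x k))" for u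
    unfolding F_def P_def by (simp add: sum_distrib_left sum_distrib_right mult.assoc sum.swap[of _ J])
  \<comment> \<open>Each \<open>u\<close> lies in the cone of its own sign pattern \<open>S = {k. 0 \<le> u \<bullet> x k}\<close>,
    and on each of these finitely many cones all \<open>P j\<close> and \<open>F\<close> are linear.\<close>
  have "\<exists>M. \<forall>u\<in>cone S. \<bar>P j u\<bar> \<le> M * F u" if "j \<in> J" for S j
  proof -
    obtain A where A: "\<forall>u\<in>cone S. P j u = A \<bullet> u"
      using rho_dir_sum_linear_on_sign_cone[of K S x "c j"] unfolding P_def cone_def b_def by blast
    obtain B where B: "\<forall>u\<in>cone S. F u = B \<bullet> u"
      using rho_dir_sum_linear_on_sign_cone[of K S x "\<lambda>k. \<Sum>j\<in>J. g j * c j k"]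
      unfolding F_eq cone_def b_def by blast
    have "\<exists>M. \<forall>u\<in>UNIV. (\<forall>k\<in>K. 0 \<le> b S k \<bullet> u) \<longrightarrow> \<bar>A \<bullet> u\<bar> \<le> M * (B \<bullet> u)"
    proof (rule polyhedral_cone_domination[OF subspace_UNIV \<open>finite K\<close>])
      fix u assume "\<forall>k\<in>K. 0 \<le> b S k \<bullet> u"
      then have "u \<in> cone S"
        unfolding cone_def by blast
      then show "0 \<le> B \<bullet> u" and "B \<bullet> u = 0 \<Longrightarrow> A \<bullet> u = 0"
        using A B nonneg[of u] zero[of u j] \<open>j \<in> J\<close> unfolding F_def by auto
    qed
    then show ?thesis
      using A B unfolding cone_def by auto
  qed
  then have "\<exists>M. \<forall>p\<in>Pow K \<times> J. \<forall>u\<in>cone (fst p). \<bar>P (snd p) u\<bar> \<le> M * F u"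
    using \<open>finite K\<close> \<open>finite J\<close> nonneg unfolding F_def
    by (intro finite_common_multiplier) auto
  then obtain M where M: "\<forall>p\<in>Pow K \<times> J. \<forall>u\<in>cone (fst p). \<bar>P (snd p) u\<bar> \<le> M * F u"
    by blast
  have "\<bar>P j u\<bar> \<le> M * F u" if "j \<in> J" for j u
  proof -
    have "({k\<in>K. 0 \<le> u \<bullet> x k}, j) \<in> Pow K \<times> J" "u \<in> cone {k\<in>K. 0 \<le> u \<bullet> x k}"
      using that unfolding cone_def b_def by (auto simp: inner_commute)
    then show ?thesis
      using M by fastforce
  qed
  then show ?thesis
    unfolding F_def by blast
qed

section \<open>Unit replication\<close>

lemma repw_Inl [simp]: "repw w i0 \<beta> (Inl i) = w i"
  and repw_Inr [simp]: "repw w i0 \<beta> (Inr l) = \<beta> l *\<^sub>R w i0"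
  and reph_Inl [simp]: "reph h i0 \<gamma> j (Inl i) = h j i"
  and reph_Inr [simp]: "reph h i0 \<gamma> j (Inr l) = \<gamma> l * h j i0"
  by (simp_all add: repw_def reph_def)

lemma ball_repH: "(\<forall>i\<in>repH I i0 L. P i) \<longleftrightarrow> (\<forall>i\<in>I - {i0}. P (Inl i)) \<and> (\<forall>l\<in>L. P (Inr l))"
  by (auto simp: repH_def)

lemma finite_repH: "finite I \<Longrightarrow> finite L \<Longrightarrow> finite (repH I i0 L)"
  unfolding repH_def by simp

lemma tangential_scaleR: "c \<noteq> 0 \<Longrightarrow> tangential (c *\<^sub>R w) v \<longleftrightarrow> tangential w v"
  by (simp add: tangential_def)

section \<open>First-order behaviour of the loss\<close>

context
  fixes ap am :: real and x :: "'k \<Rightarrow> real^'d" and y :: "'k \<Rightarrow> 'j \<Rightarrow> real"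
    and K :: "'k set" and J :: "'j set"
begin

text \<open>For a network \<open>(H, w, h)\<close>, \<open>grad_h H w h i j\<close> is \<open>\<partial>L/\<partial>h\<^sub>j\<^sub>i\<close> and \<open>dir_w H w h i j u\<close> is the
  paper's \<open>d\<^sub>j\<^sub>i\<^sup>u \<bullet> u\<close> (lemma \<open>dvec_inner_eq_dir_w\<close>). Thus \<open>loss_dir_w H w h i u\<close> is the one-sided
  derivative of the loss as \<open>w\<^sub>i\<close> moves along \<open>u\<close>, and \<open>loss_dir H w h dw dh\<close> the one along
  \<open>(dw, dh)\<close>.\<close>

definition grad_h :: "'h set \<Rightarrow> ('h \<Rightarrow> real^'d) \<Rightarrow> ('j \<Rightarrow> 'h \<Rightarrow> real) \<Rightarrow> 'h \<Rightarrow> 'j \<Rightarrow> real" where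
  "grad_h H w h i j = (\<Sum>k\<in>K. err ap am x y H w h k j * rho ap am (w i \<bullet> x k))"

definition dir_w :: "'h set \<Rightarrow> ('h \<Rightarrow> real^'d) \<Rightarrow> ('j \<Rightarrow> 'h \<Rightarrow> real) \<Rightarrow> 'h \<Rightarrow> 'j \<Rightarrow> real^'d \<Rightarrow> real" where
  "dir_w H w h i j u = (\<Sum>k\<in>K. err ap am x y H w h k j * rho_dir ap am (w i \<bullet> x k) (u \<bullet> x k))"

definition loss_dir_w :: "'h set \<Rightarrow> ('h \<Rightarrow> real^'d) \<Rightarrow> ('j \<Rightarrow> 'h \<Rightarrow> real) \<Rightarrow> 'h \<Rightarrow> real^'d \<Rightarrow> real" where
  "loss_dir_w H w h i u = (\<Sum>j\<in>J. h j i * dir_w H w h i j u)"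

definition loss_dir :: "'h set \<Rightarrow> ('h \<Rightarrow> real^'d) \<Rightarrow> ('j \<Rightarrow> 'h \<Rightarrow> real)
    \<Rightarrow> ('h \<Rightarrow> real^'d) \<Rightarrow> ('j \<Rightarrow> 'h \<Rightarrow> real) \<Rightarrow> real" where
  "loss_dir H w h dw dh = (\<Sum>i\<in>H. (\<Sum>j\<in>J. dh j i * grad_h H w h i j) + loss_dir_w H w h i (dw i))"

lemma sum_err_regroup:
  "(\<Sum>k\<in>K. \<Sum>j\<in>J. err ap am x y H w h k j *
      (\<Sum>i\<in>H. A i j * rho ap am (w i \<bullet> x k) + B i j * rho_dir ap am (w i \<bullet> x k) (D i \<bullet> x k)))
   = (\<Sum>i\<in>H. \<Sum>j\<in>J. A i j * grad_h H w h i j + B i j * dir_w H w h i j (D i))"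
proof -
  have "(\<Sum>k\<in>K. \<Sum>j\<in>J. err ap am x y H w h k j *
      (\<Sum>i\<in>H. A i j * rho ap am (w i \<bullet> x k) + B i j * rho_dir ap am (w i \<bullet> x k) (D i \<bullet> x k)))
    = (\<Sum>k\<in>K. \<Sum>j\<in>J. \<Sum>i\<in>H. A i j * (err ap am x y H w h k j * rho ap am (w i \<bullet> x k))
         + B i j * (err ap am x y H w h k j * rho_dir ap am (w i \<bullet> x k) (D i \<bullet> x k)))"
    by (simp add: sum_distrib_left algebra_simps)
  also have "\<dots> = (\<Sum>i\<in>H. \<Sum>j\<in>J. \<Sum>k\<in>K. A i j * (err ap am x y H w h k j * rho ap am (w i \<bullet> x k))
         + B i j * (err ap am x y H w h k j * rho_dir ap am (w i \<bullet> x k) (D i \<bullet> x k)))"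
    by (subst sum.swap, subst (2) sum.swap, subst sum.swap) (rule refl)
  also have "\<dots> = (\<Sum>i\<in>H. \<Sum>j\<in>J. A i j * grad_h H w h i j + B i j * dir_w H w h i j (D i))"
    by (simp add: grad_h_def dir_w_def sum.distrib sum_distrib_left)
  finally show ?thesis .
qed

lemma out_perturb:
  assumes "\<And>i. i \<in> H \<Longrightarrow>
    rho ap am (w' i \<bullet> xx) = rho ap am (w i \<bullet> xx) + rho_dir ap am (w i \<bullet> xx) (D i \<bullet> xx)"
  shows "out ap am H w' h' xx j = out ap am H w h xx j +
     (\<Sum>i\<in>H. (h' j i - h j i) * rho ap am (w i \<bullet> xx) + h' j i * rho_dir ap am (w i \<bullet> xx) (D i \<bullet> xx))"
  unfolding out_def sum.distrib[symmetric] using assms by (intro sum.cong refl) (simp add: algebra_simps)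

lemma loss_diff:
  assumes "\<And>k j. k \<in> K \<Longrightarrow> j \<in> J \<Longrightarrow> err ap am x y H w' h' k j = err ap am x y H w h k j + Dl k j"
  shows "loss ap am x y K J H w' h' - loss ap am x y K J H w h =
     (\<Sum>k\<in>K. \<Sum>j\<in>J. err ap am x y H w h k j * Dl k j + (Dl k j)\<^sup>2 / 2)"
  unfolding loss_def sum_distrib_left sum_subtractf[symmetric] using assms
  by (intro sum.cong refl) (simp add: power2_eq_square algebra_simps)

lemma rho_expansion_radius:
  assumes "finite H" "finite K"
  shows "\<exists>e>0. \<forall>w'. (\<forall>i\<in>H. norm (w' i - w i) < e) \<longrightarrow> (\<forall>i\<in>H. \<forall>k\<in>K.
           rho ap am (w' i \<bullet> x k) = rho ap am (w i \<bullet> x k) + rho_dir ap am (w i \<bullet> x k) ((w' i - w i) \<bullet> x k))"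
proof -
  have "eventually (\<lambda>e. \<forall>\<delta>. norm \<delta> < e \<longrightarrow> w i \<bullet> x k \<noteq> 0 \<longrightarrow> \<bar>\<delta> \<bullet> x k\<bar> \<le> \<bar>w i \<bullet> x k\<bar>) (at_right 0)"
    for i k
  proof -
    have "((\<lambda>e. e * norm (x k)) \<longlongrightarrow> 0) (at_right 0)"
      by (auto intro!: tendsto_eq_intros)
    moreover have "\<bar>\<delta> \<bullet> x k\<bar> \<le> e * norm (x k)" if "norm \<delta> < e" for \<delta> e
      using Cauchy_Schwarz_ineq2[of \<delta> "x k"] mult_right_mono[of "norm \<delta>" e "norm (x k)"] that by simp
    ultimately show ?thesis
      by (cases "w i \<bullet> x k = 0") (auto dest!: order_tendstoD(2)[of _ _ _ "\<bar>w i \<bullet> x k\<bar>"]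
          elim!: eventually_mono intro: order_trans[OF _ less_imp_le])
  qed
  then have "eventually (\<lambda>e. 0 < e \<and> (\<forall>i\<in>H. \<forall>k\<in>K. \<forall>\<delta>. norm \<delta> < e \<longrightarrow>
      w i \<bullet> x k \<noteq> 0 \<longrightarrow> \<bar>\<delta> \<bullet> x k\<bar> \<le> \<bar>w i \<bullet> x k\<bar>)) (at_right 0)"
    using assms by (intro eventually_conj eventually_at_right_less eventually_ball_finite ballI) auto
  then obtain e where "0 < e" and e: "\<forall>i\<in>H. \<forall>k\<in>K. \<forall>\<delta>. norm \<delta> < e \<longrightarrow>
      w i \<bullet> x k \<noteq> 0 \<longrightarrow> \<bar>\<delta> \<bullet> x k\<bar> \<le> \<bar>w i \<bullet> x k\<bar>"
    using eventually_happens'[OF trivial_limit_at_right_real] by blast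
  have "rho ap am (w' i \<bullet> x k) = rho ap am (w i \<bullet> x k) + rho_dir ap am (w i \<bullet> x k) ((w' i - w i) \<bullet> x k)"
    if "\<forall>i\<in>H. norm (w' i - w i) < e" "i \<in> H" "k \<in> K" for w' i k
  proof -
    have "rho ap am (w i \<bullet> x k + (w' i - w i) \<bullet> x k)
        = rho ap am (w i \<bullet> x k) + rho_dir ap am (w i \<bullet> x k) ((w' i - w i) \<bullet> x k)"
      using e that by (intro rho_add_rho_dir) blast
    then show ?thesis
      by (simp add: inner_diff_left)
  qed
  then show ?thesis
    using \<open>0 < e\<close> by blast
qed

lemma loss_dir_tendsto:
  assumes "finite H" "finite K"
  shows "((\<lambda>\<alpha>. (loss ap am x y K J H (\<lambda>i. w i + \<alpha> *\<^sub>R dw i) (\<lambda>j i. h j i + \<alpha> * dh j i)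
                 - loss ap am x y K J H w h) / \<alpha>) \<longlongrightarrow> loss_dir H w h dw dh) (at_right 0)"
proof -
  define E where "E \<alpha> k j = (\<Sum>i\<in>H. dh j i * rho ap am (w i \<bullet> x k)
      + (h j i + \<alpha> * dh j i) * rho_dir ap am (w i \<bullet> x k) (dw i \<bullet> x k))" for \<alpha> k j
  define q where "q \<alpha> = (\<Sum>k\<in>K. \<Sum>j\<in>J. err ap am x y H w h k j * E \<alpha> k j + \<alpha> * ((E \<alpha> k j)\<^sup>2 / 2))"
    for \<alpha>
  obtain e where "e > 0" and e: "\<forall>w'. (\<forall>i\<in>H. norm (w' i - w i) < e) \<longrightarrow> (\<forall>i\<in>H. \<forall>k\<in>K.
      rho ap am (w' i \<bullet> x k) = rho ap am (w i \<bullet> x k) + rho_dir ap am (w i \<bullet> x k) ((w' i - w i) \<bullet> x k))"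
    using rho_expansion_radius[OF assms] by blast
  have "eventually (\<lambda>\<alpha>. norm (\<alpha> *\<^sub>R dw i) < e) (at_right 0)" for i
  proof -
    have "((\<lambda>\<alpha>. norm (\<alpha> *\<^sub>R dw i)) \<longlongrightarrow> 0) (at_right 0)"
      by (auto intro!: tendsto_eq_intros)
    then show ?thesis
      using \<open>e > 0\<close> by (rule order_tendstoD)
  qed
  then have "eventually (\<lambda>\<alpha>. 0 < \<alpha> \<and> (\<forall>i\<in>H. norm (\<alpha> *\<^sub>R dw i) < e)) (at_right 0)"
    using assms by (intro eventually_conj eventually_at_right_less eventually_ball_finite) auto
  then have "eventually (\<lambda>\<alpha>. (loss ap am x y K J H (\<lambda>i. w i + \<alpha> *\<^sub>R dw i) (\<lambda>j i. h j i + \<alpha> * dh j i)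
                 - loss ap am x y K J H w h) / \<alpha> = q \<alpha>) (at_right 0)"
  proof (rule eventually_mono)
    fix \<alpha> :: real assume \<alpha>: "0 < \<alpha> \<and> (\<forall>i\<in>H. norm (\<alpha> *\<^sub>R dw i) < e)"
    have "err ap am x y H (\<lambda>i. w i + \<alpha> *\<^sub>R dw i) (\<lambda>j i. h j i + \<alpha> * dh j i) k j
        = err ap am x y H w h k j + \<alpha> * E \<alpha> k j" if "k \<in> K" "j \<in> J" for k j
    proof -
      have "out ap am H (\<lambda>i. w i + \<alpha> *\<^sub>R dw i) (\<lambda>j i. h j i + \<alpha> * dh j i) (x k) j =
         out ap am H w h (x k) j + (\<Sum>i\<in>H. (h j i + \<alpha> * dh j i - h j i) * rho ap am (w i \<bullet> x k) +
            (h j i + \<alpha> * dh j i) * rho_dir ap am (w i \<bullet> x k) ((\<alpha> *\<^sub>R dw i) \<bullet> x k))"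
        using e[rule_format, of "\<lambda>i. w i + \<alpha> *\<^sub>R dw i"] \<alpha> that by (intro out_perturb) auto
      also have "\<dots> = out ap am H w h (x k) j + \<alpha> * E \<alpha> k j"
        unfolding E_def sum_distrib_left using \<alpha>
        by (simp add: rho_dir_scale_nonneg algebra_simps)
      finally show ?thesis
        by (simp add: err_def)
    qed
    from loss_diff[OF this]
    have "loss ap am x y K J H (\<lambda>i. w i + \<alpha> *\<^sub>R dw i) (\<lambda>j i. h j i + \<alpha> * dh j i)
        - loss ap am x y K J H w h = \<alpha> * q \<alpha>"
      unfolding q_def sum_distrib_left by (simp add: power2_eq_square algebra_simps)
    then show "(loss ap am x y K J H (\<lambda>i. w i + \<alpha> *\<^sub>R dw i) (\<lambda>j i. h j i + \<alpha> * dh j i)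
                 - loss ap am x y K J H w h) / \<alpha> = q \<alpha>"
      using \<alpha> by simp
  qed
  moreover have "(q \<longlongrightarrow> q 0) (at_right 0)"
    unfolding q_def E_def by (intro tendsto_intros tendsto_ident_at) auto
  moreover have "q 0 = loss_dir H w h dw dh"
    using sum_err_regroup[of H w h "\<lambda>i j. dh j i" "\<lambda>i j. h j i" dw]
    by (simp add: q_def E_def loss_dir_def loss_dir_w_def sum.distrib)
  ultimately show ?thesis
    by (simp add: tendsto_cong)
qed

lemma stationary_iff_loss_dir_nonneg:
  assumes "finite H" "finite K"
  shows "stationary ap am x y K J H w h \<longleftrightarrow> (\<forall>dw dh. 0 \<le> loss_dir H w h dw dh)"
proof
  assume st: "stationary ap am x y K J H w h"
  show "\<forall>dw dh. 0 \<le> loss_dir H w h dw dh"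
  proof (intro allI)
    fix dw dh
    obtain D where "D \<ge> 0" and D: "((\<lambda>\<alpha>. (loss ap am x y K J H (\<lambda>i. w i + \<alpha> *\<^sub>R dw i) (\<lambda>j i. h j i + \<alpha> * dh j i)
        - loss ap am x y K J H w h) / \<alpha>) \<longlongrightarrow> D) (at_right 0)"
      using st unfolding stationary_def by blast
    have "D = loss_dir H w h dw dh"
      using trivial_limit_at_right_real D loss_dir_tendsto[OF assms] by (rule tendsto_unique)
    then show "0 \<le> loss_dir H w h dw dh"
      using \<open>D \<ge> 0\<close> by simp
  qed
next
  assume "\<forall>dw dh. 0 \<le> loss_dir H w h dw dh"
  then show "stationary ap am x y K J H w h"
    unfolding stationary_def using loss_dir_tendsto[OF assms] by blast
qed

lemma dir_w_zero [simp]: "dir_w H w h i j 0 = 0"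
  by (simp add: dir_w_def)

lemma stationary_iff_neuronwise:
  assumes "finite H" "finite K" "finite J"
  shows "stationary ap am x y K J H w h \<longleftrightarrow>
    (\<forall>i\<in>H. (\<forall>j\<in>J. grad_h H w h i j = 0) \<and> (\<forall>u. 0 \<le> loss_dir_w H w h i u))"
    (is "_ \<longleftrightarrow> ?neuronwise")
proof -
  have along_h: "loss_dir H w h (\<lambda>_. 0) (\<lambda>j' i'. if j' = j then if i' = i then c else 0 else 0)
      = c * grad_h H w h i j" if "i \<in> H" "j \<in> J" for i j c
    using that assms
    by (simp add: loss_dir_def loss_dir_w_def if_distrib[of "\<lambda>t. t * _"] sum.delta cong: if_cong)
  have along_w: "loss_dir H w h (\<lambda>i'. if i' = i then u else 0) (\<lambda>_ _. 0) = loss_dir_w H w h i u"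
    if "i \<in> H" for i u
  proof -
    have "loss_dir H w h (\<lambda>i'. if i' = i then u else 0) (\<lambda>_ _. 0)
        = (\<Sum>i'\<in>H. if i' = i then loss_dir_w H w h i u else 0)"
      unfolding loss_dir_def by (intro sum.cong) (auto simp: loss_dir_w_def)
    then show ?thesis
      using that assms by simp
  qed
  have "(\<forall>dw dh. 0 \<le> loss_dir H w h dw dh) \<longleftrightarrow> ?neuronwise"
  proof
    assume nonneg: "\<forall>dw dh. 0 \<le> loss_dir H w h dw dh"
    show ?neuronwise
    proof (intro ballI conjI allI)
      fix i j assume "i \<in> H" "j \<in> J"
      have "0 \<le> c * grad_h H w h i j" for c
        using nonneg along_h[OF \<open>i \<in> H\<close> \<open>j \<in> J\<close>, of c, symmetric] by simp
      from this[of 1] this[of "-1"] show "grad_h H w h i j = 0"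
        by simp
    next
      fix i u assume "i \<in> H"
      then show "0 \<le> loss_dir_w H w h i u"
        using nonneg along_w[OF \<open>i \<in> H\<close>, of u, symmetric] by simp
    qed
  next
    assume ?neuronwise
    then show "\<forall>dw dh. 0 \<le> loss_dir H w h dw dh"
      by (auto simp: loss_dir_def intro!: sum_nonneg)
  qed
  then show ?thesis
    by (rule trans[OF stationary_iff_loss_dir_nonneg[OF assms(1,2)]])
qed

lemma dvec_inner_eq_dir_w:
  assumes "finite K"
  shows "dvec ap am x y K J H w h i j v \<bullet> v = dir_w H w h i j v"
proof -
  define e where "e k = err ap am x y H w h k j" for k
  define Kp where "Kp = {k\<in>K. 0 < w i \<bullet> x k \<or> (w i \<bullet> x k = 0 \<and> 0 < v \<bullet> x k)}"
  define Km where "Km = {k\<in>K. w i \<bullet> x k < 0 \<or> (w i \<bullet> x k = 0 \<and> v \<bullet> x k < 0)}"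
  have "eventually (\<lambda>\<Delta>. \<forall>k\<in>K. (0 < (w i + \<Delta> *\<^sub>R v) \<bullet> x k \<longleftrightarrow> k \<in> Kp)
      \<and> ((w i + \<Delta> *\<^sub>R v) \<bullet> x k < 0 \<longleftrightarrow> k \<in> Km)) (at_right 0)"
    using assms eventually_sign_perturbation
    by (intro eventually_ball_finite ballI) (auto simp: Kp_def Km_def inner_add_left elim!: eventually_mono)
  then have "eventually (\<lambda>\<Delta>. (\<Sum>k\<in>{k\<in>K. (w i + \<Delta> *\<^sub>R v) \<bullet> x k > 0}. (ap * e k) *\<^sub>R x k)
      + (\<Sum>k\<in>{k\<in>K. (w i + \<Delta> *\<^sub>R v) \<bullet> x k < 0}. (am * e k) *\<^sub>R x k)
      = (\<Sum>k\<in>Kp. (ap * e k) *\<^sub>R x k) + (\<Sum>k\<in>Km. (am * e k) *\<^sub>R x k)) (at_right 0)"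
    by (rule eventually_mono) (auto intro!: arg_cong2[where f = "(+)"] sum.cong simp: Kp_def Km_def)
  then have "dvec ap am x y K J H w h i j v = (\<Sum>k\<in>Kp. (ap * e k) *\<^sub>R x k) + (\<Sum>k\<in>Km. (am * e k) *\<^sub>R x k)"
    unfolding dvec_def e_def by (intro tendsto_Lim trivial_limit_at_right_real tendsto_eventually)
  also have "\<dots> \<bullet> v = (\<Sum>k\<in>Kp. ap * e k * (x k \<bullet> v)) + (\<Sum>k\<in>Km. am * e k * (x k \<bullet> v))"
    by (simp add: inner_add_left inner_sum_left)
  also have "\<dots> = (\<Sum>k\<in>K. e k * rho_dir ap am (w i \<bullet> x k) (v \<bullet> x k))"
    unfolding Kp_def Km_def using assms
    by (simp add: sum.inter_filter sum.distrib[symmetric] rho_dir_def inner_commute, intro sum.cong refl)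
      (auto simp: rho_def)
  finally show ?thesis
    unfolding dir_w_def e_def .
qed

lemma tderiv_eq_loss_dir_w: "finite K \<Longrightarrow> tderiv ap am x y K J H w h i v = loss_dir_w H w h i v"
  by (simp add: tderiv_def loss_dir_w_def dvec_inner_eq_dir_w)

lemma escape_iff: "finite K \<Longrightarrow> escape ap am x y K J H w h i \<longleftrightarrow>
   (\<exists>j'\<in>J. \<exists>v. tangential (w i) v \<and> loss_dir_w H w h i v = 0 \<and> dir_w H w h i j' v \<noteq> 0)"
  by (simp add: escape_def tderiv_eq_loss_dir_w dvec_inner_eq_dir_w)

lemma dir_w_add_radial: "dir_w H w h i j (a *\<^sub>R w i + r) = a * grad_h H w h i j + dir_w H w h i j r"
  unfolding dir_w_def grad_h_def inner_add_left inner_scaleR_left rho_dir_add_radial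
  by (simp add: sum_distrib_left sum.distrib algebra_simps)

lemma dir_w_scale_nonneg: "0 \<le> c \<Longrightarrow> dir_w H w h i j (c *\<^sub>R u) = c * dir_w H w h i j u"
  unfolding dir_w_def by (simp add: rho_dir_scale_nonneg sum_distrib_left algebra_simps)

lemma dir_w_tangential_reduction:
  assumes "\<forall>j\<in>J. grad_h H w h i j = 0"
  obtains "\<forall>j\<in>J. dir_w H w h i j u = 0"
  | c v where "c > 0" "tangential (w i) v" "\<forall>j\<in>J. dir_w H w h i j u = c * dir_w H w h i j v"
proof -
  define a where "a = (if w i = 0 then 0 else (u \<bullet> w i) / (w i \<bullet> w i))"
  define r where "r = u - a *\<^sub>R w i"
  have "w i \<bullet> r = 0"
    unfolding r_def a_def by (auto simp: inner_diff_right inner_commute)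
  have dir_r: "\<forall>j\<in>J. dir_w H w h i j u = dir_w H w h i j r"
    using assms dir_w_add_radial[of H w h i _ a r] by (simp add: r_def)
  show ?thesis
  proof (cases "r = 0")
    case True
    then show ?thesis
      using dir_r that(1) by simp
  next
    case False
    define v where "v = (1 / norm r) *\<^sub>R r"
    have "tangential (w i) v"
      unfolding tangential_def v_def using False \<open>w i \<bullet> r = 0\<close> by simp
    moreover have "r = norm r *\<^sub>R v"
      unfolding v_def using False by simp
    then have "\<forall>j\<in>J. dir_w H w h i j u = norm r * dir_w H w h i j v"
      using dir_r by (metis dir_w_scale_nonneg norm_ge_zero)
    ultimately show ?thesis
      using that(2)[of "norm r" v] False by simp
  qed
qed

lemma dir_w_dominated_if_not_escape:
  assumes "finite H" "finite K" "finite J" "stationary ap am x y K J H w h" "i \<in> H"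
    and "\<not> escape ap am x y K J H w h i"
  shows "\<exists>M. \<forall>u. \<forall>j\<in>J. \<bar>dir_w H w h i j u\<bar> \<le> M * loss_dir_w H w h i u"
proof -
  have grad: "\<forall>j\<in>J. grad_h H w h i j = 0" and nonneg: "\<forall>u. 0 \<le> loss_dir_w H w h i u"
    using assms(4,5) stationary_iff_neuronwise[OF assms(1-3)] by blast+
  have zero: "dir_w H w h i j u = 0" if "loss_dir_w H w h i u = 0" "j \<in> J" for u j
  proof (cases rule: dir_w_tangential_reduction[OF grad, of u])
    case (2 c v)
    then have "loss_dir_w H w h i u = c * loss_dir_w H w h i v"
      by (simp add: loss_dir_w_def sum_distrib_left algebra_simps)
    then have "loss_dir_w H w h i v = 0"
      using \<open>c > 0\<close> that(1) by simp
    then have "dir_w H w h i j v = 0"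
      using assms(6) \<open>tangential (w i) v\<close> \<open>j \<in> J\<close> unfolding escape_iff[OF assms(2)] by blast
    then show ?thesis
      using 2 \<open>j \<in> J\<close> by simp
  qed (use that in simp)
  show ?thesis
    using rho_dir_sums_domination[where c = "\<lambda>j k. err ap am x y H w h k j" and z = "\<lambda>k. w i \<bullet> x k"
        and g = "\<lambda>j. h j i", OF assms(2,3)] nonneg zero
    unfolding loss_dir_w_def dir_w_def by blast
qed

lemma loss_diff_ge_first_order:
  assumes "\<And>i k. i \<in> H \<Longrightarrow> k \<in> K \<Longrightarrow>
    rho ap am (w' i \<bullet> x k) = rho ap am (w i \<bullet> x k) + rho_dir ap am (w i \<bullet> x k) ((w' i - w i) \<bullet> x k)"
  shows "(\<Sum>i\<in>H. \<Sum>j\<in>J. (h' j i - h j i) * grad_h H w h i j + h' j i * dir_w H w h i j (w' i - w i))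
      \<le> loss ap am x y K J H w' h' - loss ap am x y K J H w h"
proof -
  define Dl where "Dl k j = (\<Sum>i\<in>H. (h' j i - h j i) * rho ap am (w i \<bullet> x k)
      + h' j i * rho_dir ap am (w i \<bullet> x k) ((w' i - w i) \<bullet> x k))" for k j
  have "err ap am x y H w' h' k j = err ap am x y H w h k j + Dl k j" if "k \<in> K" "j \<in> J" for k j
    using out_perturb[of H w' "x k" w "\<lambda>i. w' i - w i" h' j h] assms that
    by (simp add: err_def Dl_def)
  from loss_diff[OF this]
  have "loss ap am x y K J H w' h' - loss ap am x y K J H w h
      = (\<Sum>k\<in>K. \<Sum>j\<in>J. err ap am x y H w h k j * Dl k j + (Dl k j)\<^sup>2 / 2)" .
  also have "\<dots> \<ge> (\<Sum>k\<in>K. \<Sum>j\<in>J. err ap am x y H w h k j * Dl k j)"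
    by (intro sum_mono) auto
  also have "(\<Sum>k\<in>K. \<Sum>j\<in>J. err ap am x y H w h k j * Dl k j)
      = (\<Sum>i\<in>H. \<Sum>j\<in>J. (h' j i - h j i) * grad_h H w h i j + h' j i * dir_w H w h i j (w' i - w i))"
    unfolding Dl_def by (rule sum_err_regroup)
  finally show ?thesis .
qed

lemma dir_w_uniformly_dominated:
  assumes "finite H" "finite K" "finite J" "stationary ap am x y K J H w h"
    and no_escape: "\<forall>i\<in>H. \<not> escape ap am x y K J H w h i"
  shows "\<exists>M\<ge>0. \<forall>i\<in>H. \<forall>j\<in>J. \<forall>u. \<bar>dir_w H w h i j u\<bar> \<le> M * loss_dir_w H w h i u"
proof -
  have nonneg: "\<forall>i\<in>H. \<forall>u. 0 \<le> loss_dir_w H w h i u"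
    using assms(4) stationary_iff_neuronwise[OF assms(1-3)] by blast
  have "\<exists>M. \<forall>p\<in>H \<times> J. \<forall>u\<in>UNIV. \<bar>dir_w H w h (fst p) (snd p) u\<bar> \<le> M * loss_dir_w H w h (fst p) u"
  proof (rule finite_common_multiplier)
    fix p assume "p \<in> H \<times> J"
    then have "fst p \<in> H" "snd p \<in> J"
      by auto
    then obtain M where "\<forall>u. \<forall>j\<in>J. \<bar>dir_w H w h (fst p) j u\<bar> \<le> M * loss_dir_w H w h (fst p) u"
      using dir_w_dominated_if_not_escape[OF assms(1-4)] no_escape by blast
    then show "\<exists>M. \<forall>u\<in>UNIV. \<bar>dir_w H w h (fst p) (snd p) u\<bar> \<le> M * loss_dir_w H w h (fst p) u"
      using \<open>snd p \<in> J\<close> by blast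
  qed (use assms(1,3) nonneg in auto)
  then obtain M where M: "\<forall>p\<in>H \<times> J. \<forall>u\<in>UNIV. \<bar>dir_w H w h (fst p) (snd p) u\<bar> \<le> M * loss_dir_w H w h (fst p) u"
    by blast
  have "\<bar>dir_w H w h i j u\<bar> \<le> \<bar>M\<bar> * loss_dir_w H w h i u" if "i \<in> H" "j \<in> J" for i j u
  proof -
    have "\<bar>dir_w H w h i j u\<bar> \<le> M * loss_dir_w H w h i u"
      using bspec[OF M SigmaI[OF that]] by simp
    also have "\<dots> \<le> \<bar>M\<bar> * loss_dir_w H w h i u"
      using nonneg that by (simp add: mult_right_mono)
    finally show ?thesis .
  qed
  then show ?thesis
    by (intro exI[of _ "\<bar>M\<bar>"]) auto
qed

lemma local_min_if_no_escape:
  assumes "finite H" "finite K" "finite J" "stationary ap am x y K J H w h"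
    and no_escape: "\<forall>i\<in>H. \<not> escape ap am x y K J H w h i"
  shows "local_min ap am x y K J H w h"
proof -
  have grad: "\<forall>i\<in>H. \<forall>j\<in>J. grad_h H w h i j = 0" and nonneg: "\<forall>i\<in>H. \<forall>u. 0 \<le> loss_dir_w H w h i u"
    using assms(4) stationary_iff_neuronwise[OF assms(1-3)] by blast+
  obtain M where "M \<ge> 0" and M: "\<forall>i\<in>H. \<forall>j\<in>J. \<forall>u. \<bar>dir_w H w h i j u\<bar> \<le> M * loss_dir_w H w h i u"
    using dir_w_uniformly_dominated[OF assms] by blast
  obtain e where "e > 0" and e: "\<forall>w'. (\<forall>i\<in>H. norm (w' i - w i) < e) \<longrightarrow> (\<forall>i\<in>H. \<forall>k\<in>K.
      rho ap am (w' i \<bullet> x k) = rho ap am (w i \<bullet> x k) + rho_dir ap am (w i \<bullet> x k) ((w' i - w i) \<bullet> x k))"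
    using rho_expansion_radius[OF assms(1,2)] by blast
  define \<epsilon> where "\<epsilon> = min e (1 / (card J * M + 1))"
  have "\<epsilon> > 0"
    unfolding \<epsilon>_def using \<open>e > 0\<close> \<open>M \<ge> 0\<close> by (simp add: add_nonneg_pos)
  have "0 < card J * M + 1"
    using \<open>M \<ge> 0\<close> by (simp add: add_nonneg_pos)
  moreover have "\<epsilon> \<le> 1 / (card J * M + 1)"
    unfolding \<epsilon>_def by simp
  ultimately have "\<epsilon> * (card J * M + 1) \<le> 1"
    by (simp add: pos_le_divide_eq)
  then have "card J * \<epsilon> * M \<le> 1"
    using \<open>\<epsilon> > 0\<close> by (simp add: algebra_simps)
  show ?thesis
    unfolding local_min_def
  proof (intro exI[of _ \<epsilon>] conjI allI impI \<open>\<epsilon> > 0\<close>)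
    fix w' h'
    assume near: "(\<forall>i\<in>H. norm (w' i - w i) < \<epsilon>) \<and> (\<forall>j\<in>J. \<forall>i\<in>H. \<bar>h' j i - h j i\<bar> < \<epsilon>)"
    have "0 \<le> (\<Sum>j\<in>J. (h' j i - h j i) * grad_h H w h i j + h' j i * dir_w H w h i j (w' i - w i))"
      if "i \<in> H" for i
    proof -
      define F where "F = loss_dir_w H w h i (w' i - w i)"
      define \<Phi> where "\<Phi> j = dir_w H w h i j (w' i - w i)" for j
      have "\<bar>(h' j i - h j i) * \<Phi> j\<bar> \<le> \<epsilon> * (M * F)" if "j \<in> J" for j
        unfolding abs_mult
      proof (rule mult_mono)
        show "\<bar>h' j i - h j i\<bar> \<le> \<epsilon>"
          using near \<open>i \<in> H\<close> that by (meson less_imp_le)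
        show "\<bar>\<Phi> j\<bar> \<le> M * F"
          using M \<open>i \<in> H\<close> that unfolding \<Phi>_def F_def by blast
      qed (use \<open>\<epsilon> > 0\<close> in auto)
      then have "\<bar>\<Sum>j\<in>J. (h' j i - h j i) * \<Phi> j\<bar> \<le> (\<Sum>j\<in>J. \<epsilon> * (M * F))"
        by (intro order_trans[OF sum_abs] sum_mono)
      also have "\<dots> = (card J * \<epsilon> * M) * F"
        by simp
      also have "\<dots> \<le> F"
        using mult_right_mono[OF \<open>card J * \<epsilon> * M \<le> 1\<close>] nonneg \<open>i \<in> H\<close> unfolding F_def by simp
      finally have "0 \<le> F + (\<Sum>j\<in>J. (h' j i - h j i) * \<Phi> j)"
        by linarith
      also have "\<dots> = (\<Sum>j\<in>J. (h' j i - h j i) * grad_h H w h i j + h' j i * \<Phi> j)"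
        unfolding F_def loss_dir_w_def \<Phi>_def sum.distrib[symmetric] using grad that
        by (intro sum.cong refl) (simp add: algebra_simps)
      finally show ?thesis
        unfolding \<Phi>_def .
    qed
    then have "0 \<le> (\<Sum>i\<in>H. \<Sum>j\<in>J. (h' j i - h j i) * grad_h H w h i j + h' j i * dir_w H w h i j (w' i - w i))"
      by (rule sum_nonneg)
    also have "\<dots> \<le> loss ap am x y K J H w' h' - loss ap am x y K J H w h"
    proof (rule loss_diff_ge_first_order)
      have "\<forall>i\<in>H. norm (w' i - w i) < e"
        using near unfolding \<epsilon>_def by simp
      then show "rho ap am (w' i \<bullet> x k) = rho ap am (w i \<bullet> x k) + rho_dir ap am (w i \<bullet> x k) ((w' i - w i) \<bullet> x k)"
        if "i \<in> H" "k \<in> K" for i k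
        using e that by blast
    qed
    finally show "loss ap am x y K J H w h \<le> loss ap am x y K J H w' h'"
      by simp
  qed
qed

lemma type1_min_iff_no_escape:
  assumes "finite H" "finite K" "finite J"
  shows "type1_min ap am x y K J H w h \<longleftrightarrow>
    stationary ap am x y K J H w h \<and> (\<forall>i\<in>H. \<not> escape ap am x y K J H w h i)"
  using local_min_if_no_escape[OF assms] unfolding type1_min_def by blast

lemma tderiv_vanishes_iff:
  assumes "finite H" "finite K" "finite J" "stationary ap am x y K J H w h" "i \<in> H"
  shows "(\<forall>v. tangential (w i) v \<longrightarrow> tderiv ap am x y K J H w h i v = 0) \<longleftrightarrow>
    (\<forall>u. loss_dir_w H w h i u = 0)"
proof
  assume tangential_zero: "\<forall>v. tangential (w i) v \<longrightarrow> tderiv ap am x y K J H w h i v = 0"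
  have grad: "\<forall>j\<in>J. grad_h H w h i j = 0"
    using assms(4,5) stationary_iff_neuronwise[OF assms(1-3)] by blast
  show "\<forall>u. loss_dir_w H w h i u = 0"
  proof
    fix u
    show "loss_dir_w H w h i u = 0"
    proof (cases rule: dir_w_tangential_reduction[OF grad, of u])
      case (2 c v)
      then have "loss_dir_w H w h i u = c * loss_dir_w H w h i v"
        by (simp add: loss_dir_w_def sum_distrib_left algebra_simps)
      then show ?thesis
        using tangential_zero \<open>tangential (w i) v\<close> by (simp add: tderiv_eq_loss_dir_w[OF assms(2)])
    qed (simp add: loss_dir_w_def)
  qed
qed (simp add: tderiv_eq_loss_dir_w[OF assms(2)])

context
  fixes I :: "'i set" and i0 :: 'i and L :: "'l set" and \<beta> \<gamma> :: "'l \<Rightarrow> real"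
  assumes finite_I: "finite I" and finite_L: "finite L" and i0: "i0 \<in> I"
    and \<beta>_pos: "\<forall>l\<in>L. \<beta> l > 0" and \<beta>\<gamma>_sum: "(\<Sum>l\<in>L. \<beta> l * \<gamma> l) = 1"
begin

lemma out_replicate: "out ap am (repH I i0 L) (repw w i0 \<beta>) (reph h i0 \<gamma>) xx j = out ap am I w h xx j"
proof -
  have "out ap am (repH I i0 L) (repw w i0 \<beta>) (reph h i0 \<gamma>) xx j =
     (\<Sum>i\<in>I - {i0}. h j i * rho ap am (w i \<bullet> xx)) +
     (\<Sum>l\<in>L. \<gamma> l * h j i0 * rho ap am ((\<beta> l *\<^sub>R w i0) \<bullet> xx))"
    unfolding out_def repH_def using finite_I finite_L
    by (subst sum.union_disjoint) (auto simp: sum.reindex)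
  also have "(\<Sum>l\<in>L. \<gamma> l * h j i0 * rho ap am ((\<beta> l *\<^sub>R w i0) \<bullet> xx)) =
      (\<Sum>l\<in>L. \<beta> l * \<gamma> l) * (h j i0 * rho ap am (w i0 \<bullet> xx))"
    unfolding sum_distrib_right using \<beta>_pos by (intro sum.cong refl) (simp add: rho_scale_nonneg less_imp_le)
  also have "(\<Sum>i\<in>I - {i0}. h j i * rho ap am (w i \<bullet> xx)) + \<dots> = out ap am I w h xx j"
    unfolding out_def \<beta>\<gamma>_sum using finite_I i0 by (simp add: sum.remove)
  finally show ?thesis .
qed

lemma err_replicate: "err ap am x y (repH I i0 L) (repw w i0 \<beta>) (reph h i0 \<gamma>) = err ap am x y I w h"
  by (intro ext) (simp add: err_def out_replicate)

lemma grad_h_replicate_Inl: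
  "grad_h (repH I i0 L) (repw w i0 \<beta>) (reph h i0 \<gamma>) (Inl i) j = grad_h I w h i j"
  unfolding grad_h_def err_replicate by simp

lemma grad_h_replicate_Inr:
  "l \<in> L \<Longrightarrow> grad_h (repH I i0 L) (repw w i0 \<beta>) (reph h i0 \<gamma>) (Inr l) j = \<beta> l * grad_h I w h i0 j"
  unfolding grad_h_def err_replicate using \<beta>_pos
  by (simp add: rho_scale_nonneg less_imp_le sum_distrib_left algebra_simps)

lemma dir_w_replicate_Inl:
  "dir_w (repH I i0 L) (repw w i0 \<beta>) (reph h i0 \<gamma>) (Inl i) j u = dir_w I w h i j u"
  unfolding dir_w_def err_replicate by simp

lemma dir_w_replicate_Inr:
  "l \<in> L \<Longrightarrow> dir_w (repH I i0 L) (repw w i0 \<beta>) (reph h i0 \<gamma>) (Inr l) j u = dir_w I w h i0 j u"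
  unfolding dir_w_def err_replicate using \<beta>_pos by (simp add: rho_dir_scale_base)

lemma loss_dir_w_replicate_Inl:
  "loss_dir_w (repH I i0 L) (repw w i0 \<beta>) (reph h i0 \<gamma>) (Inl i) u = loss_dir_w I w h i u"
  unfolding loss_dir_w_def dir_w_replicate_Inl by simp

lemma loss_dir_w_replicate_Inr:
  "l \<in> L \<Longrightarrow> loss_dir_w (repH I i0 L) (repw w i0 \<beta>) (reph h i0 \<gamma>) (Inr l) u = \<gamma> l * loss_dir_w I w h i0 u"
  unfolding loss_dir_w_def by (simp add: dir_w_replicate_Inr sum_distrib_left algebra_simps)

lemma stationary_replicate_iff:
  assumes "finite K" "finite J" "stationary ap am x y K J I w h"
  shows "stationary ap am x y K J (repH I i0 L) (repw w i0 \<beta>) (reph h i0 \<gamma>) \<longleftrightarrow>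
    (\<forall>u. loss_dir_w I w h i0 u = 0) \<or> (\<forall>l\<in>L. 0 \<le> \<gamma> l)"
proof -
  have neuron: "\<forall>i\<in>I. (\<forall>j\<in>J. grad_h I w h i j = 0) \<and> (\<forall>u. 0 \<le> loss_dir_w I w h i u)"
    using assms(3) stationary_iff_neuronwise[OF finite_I assms(1,2)] by blast
  then have F_nonneg: "0 \<le> loss_dir_w I w h i0 u" for u
    using i0 by blast
  have "stationary ap am x y K J (repH I i0 L) (repw w i0 \<beta>) (reph h i0 \<gamma>) \<longleftrightarrow>
      (\<forall>l\<in>L. \<forall>u. 0 \<le> \<gamma> l * loss_dir_w I w h i0 u)"
  proof -
    have "\<forall>i\<in>I - {i0}. (\<forall>j\<in>J. grad_h (repH I i0 L) (repw w i0 \<beta>) (reph h i0 \<gamma>) (Inl i) j = 0)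
        \<and> (\<forall>u. 0 \<le> loss_dir_w (repH I i0 L) (repw w i0 \<beta>) (reph h i0 \<gamma>) (Inl i) u)"
      using neuron by (simp add: grad_h_replicate_Inl loss_dir_w_replicate_Inl)
    moreover have "(\<forall>l\<in>L. (\<forall>j\<in>J. grad_h (repH I i0 L) (repw w i0 \<beta>) (reph h i0 \<gamma>) (Inr l) j = 0)
        \<and> (\<forall>u. 0 \<le> loss_dir_w (repH I i0 L) (repw w i0 \<beta>) (reph h i0 \<gamma>) (Inr l) u))
      \<longleftrightarrow> (\<forall>l\<in>L. \<forall>u. 0 \<le> \<gamma> l * loss_dir_w I w h i0 u)"
      using neuron i0 by (simp add: grad_h_replicate_Inr loss_dir_w_replicate_Inr)
    ultimately show ?thesis
      unfolding stationary_iff_neuronwise[OF finite_repH[OF finite_I finite_L] assms(1,2)] ball_repH by blast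
  qed
  also have "\<dots> \<longleftrightarrow> (\<forall>u. loss_dir_w I w h i0 u = 0) \<or> (\<forall>l\<in>L. 0 \<le> \<gamma> l)"
  proof
    assume nonneg: "\<forall>l\<in>L. \<forall>u. 0 \<le> \<gamma> l * loss_dir_w I w h i0 u"
    show "(\<forall>u. loss_dir_w I w h i0 u = 0) \<or> (\<forall>l\<in>L. 0 \<le> \<gamma> l)"
    proof (rule disjCI)
      assume "\<not> (\<forall>l\<in>L. 0 \<le> \<gamma> l)"
      then obtain l where "l \<in> L" "\<gamma> l < 0"
        by force
      show "\<forall>u. loss_dir_w I w h i0 u = 0"
      proof
        fix u
        have "0 \<le> \<gamma> l * loss_dir_w I w h i0 u"
          using nonneg \<open>l \<in> L\<close> by blast
        then show "loss_dir_w I w h i0 u = 0"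
          using \<open>\<gamma> l < 0\<close> F_nonneg[of u] by (simp add: zero_le_mult_iff)
      qed
    qed
  qed (use F_nonneg in auto)
  finally show ?thesis .
qed

lemma escape_replicate_Inl:
  assumes "finite K"
  shows "escape ap am x y K J (repH I i0 L) (repw w i0 \<beta>) (reph h i0 \<gamma>) (Inl i) \<longleftrightarrow>
    escape ap am x y K J I w h i"
  by (simp add: escape_iff[OF assms] loss_dir_w_replicate_Inl dir_w_replicate_Inl)

lemma escape_replicate_Inr:
  assumes "finite K" "l \<in> L"
  shows "escape ap am x y K J (repH I i0 L) (repw w i0 \<beta>) (reph h i0 \<gamma>) (Inr l) \<longleftrightarrow>
    (\<exists>j'\<in>J. \<exists>v. tangential (w i0) v \<and> \<gamma> l * loss_dir_w I w h i0 v = 0 \<and> dir_w I w h i0 j' v \<noteq> 0)"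
proof -
  have "\<beta> l \<noteq> 0"
    using \<beta>_pos assms(2) by force
  then show ?thesis
    using assms by (simp add: escape_iff[OF assms(1)] tangential_scaleR loss_dir_w_replicate_Inr dir_w_replicate_Inr)
qed

lemma no_escape_replicate_iff:
  assumes "finite K" "finite J" "stationary ap am x y K J I w h"
    and no_escape: "\<forall>i\<in>I. \<not> escape ap am x y K J I w h i"
  shows "(\<forall>i\<in>repH I i0 L. \<not> escape ap am x y K J (repH I i0 L) (repw w i0 \<beta>) (reph h i0 \<gamma>) i) \<longleftrightarrow>
    (\<forall>u. loss_dir_w I w h i0 u = 0) \<or> (\<forall>l\<in>L. \<gamma> l \<noteq> 0)"
proof -
  have escape_Inr: "escape ap am x y K J (repH I i0 L) (repw w i0 \<beta>) (reph h i0 \<gamma>) (Inr l) \<longleftrightarrow>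
      \<gamma> l = 0 \<and> \<not> (\<forall>u. loss_dir_w I w h i0 u = 0)" if l: "l \<in> L" for l
  proof
    assume "escape ap am x y K J (repH I i0 L) (repw w i0 \<beta>) (reph h i0 \<gamma>) (Inr l)"
    then obtain j' v where "j' \<in> J" "tangential (w i0) v" "\<gamma> l * loss_dir_w I w h i0 v = 0"
      and "dir_w I w h i0 j' v \<noteq> 0"
      unfolding escape_replicate_Inr[OF assms(1) l] by blast
    moreover have "\<not> escape ap am x y K J I w h i0"
      using no_escape i0 by blast
    ultimately have "loss_dir_w I w h i0 v \<noteq> 0"
      unfolding escape_iff[OF assms(1)] by blast
    then show "\<gamma> l = 0 \<and> \<not> (\<forall>u. loss_dir_w I w h i0 u = 0)"
      using \<open>\<gamma> l * loss_dir_w I w h i0 v = 0\<close> by auto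
  next
    assume "\<gamma> l = 0 \<and> \<not> (\<forall>u. loss_dir_w I w h i0 u = 0)"
    then have "\<not> (\<forall>v. tangential (w i0) v \<longrightarrow> tderiv ap am x y K J I w h i0 v = 0)"
      using tderiv_vanishes_iff[OF finite_I assms(1-3) i0] by blast
    then obtain v where "tangential (w i0) v" "tderiv ap am x y K J I w h i0 v \<noteq> 0"
      by blast
    moreover from this have "loss_dir_w I w h i0 v \<noteq> 0"
      by (simp add: tderiv_eq_loss_dir_w[OF assms(1)])
    moreover from this obtain j' where "j' \<in> J" "dir_w I w h i0 j' v \<noteq> 0"
      unfolding loss_dir_w_def by (metis (no_types, lifting) mult_zero_right sum.neutral)
    ultimately show "escape ap am x y K J (repH I i0 L) (repw w i0 \<beta>) (reph h i0 \<gamma>) (Inr l)"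
      unfolding escape_replicate_Inr[OF assms(1) l] using \<open>\<gamma> l = 0 \<and> _\<close> by auto
  qed
  have "\<forall>i\<in>I - {i0}. \<not> escape ap am x y K J (repH I i0 L) (repw w i0 \<beta>) (reph h i0 \<gamma>) (Inl i)"
    using no_escape by (simp add: escape_replicate_Inl[OF assms(1)])
  moreover have "(\<forall>l\<in>L. \<not> escape ap am x y K J (repH I i0 L) (repw w i0 \<beta>) (reph h i0 \<gamma>) (Inr l)) \<longleftrightarrow>
      (\<forall>u. loss_dir_w I w h i0 u = 0) \<or> (\<forall>l\<in>L. \<gamma> l \<noteq> 0)"
    using escape_Inr by blast
  ultimately show ?thesis
    unfolding ball_repH by blast
qed

end

end

theorem proposition1:
  fixes ap am :: real
    and x :: "'k \<Rightarrow> real^'d" and y :: "'k \<Rightarrow> 'j \<Rightarrow> real"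
    and K :: "'k set" and J :: "'j set" and I :: "'i set"
    and w :: "'i \<Rightarrow> real^'d" and h :: "'j \<Rightarrow> 'i \<Rightarrow> real"
    and i0 :: 'i and L :: "'l set" and \<beta> \<gamma> :: "'l \<Rightarrow> real"
  assumes "CARD('d) > 1" and "finite I" and "finite J" and "finite K" and "ap \<noteq> am"
    and "finite L" and "\<forall>l\<in>L. \<beta> l > 0" and "(\<Sum>l\<in>L. \<beta> l * \<gamma> l) = 1"
    and "i0 \<in> I"
    and "stationary ap am x y K J I w h"
  shows "(stationary ap am x y K J (repH I i0 L) (repw w i0 \<beta>) (reph h i0 \<gamma>) \<longleftrightarrow>
            ((\<forall>v. tangential (w i0) v \<longrightarrow> tderiv ap am x y K J I w h i0 v = 0)
             \<or> (\<forall>l\<in>L. \<gamma> l \<ge> 0)))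
       \<and> (type1_min ap am x y K J I w h \<longrightarrow>
           (type1_min ap am x y K J (repH I i0 L) (repw w i0 \<beta>) (reph h i0 \<gamma>) \<longleftrightarrow>
            ((\<forall>v. tangential (w i0) v \<longrightarrow> tderiv ap am x y K J I w h i0 v = 0)
             \<or> (\<forall>l\<in>L. \<gamma> l > 0))))"
proof -
  note replication = assms(2,6,9,7,8)
  let ?F = "loss_dir_w ap am x y K J I w h i0"
  have tangential_iff: "(\<forall>v. tangential (w i0) v \<longrightarrow> tderiv ap am x y K J I w h i0 v = 0) \<longleftrightarrow> (\<forall>u. ?F u = 0)"
    by (rule tderiv_vanishes_iff[OF assms(2,4,3,10,9)])
  have stationary_iff: "stationary ap am x y K J (repH I i0 L) (repw w i0 \<beta>) (reph h i0 \<gamma>) \<longleftrightarrow>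
      (\<forall>u. ?F u = 0) \<or> (\<forall>l\<in>L. 0 \<le> \<gamma> l)"
    by (rule stationary_replicate_iff[OF replication assms(4,3,10)])
  have "type1_min ap am x y K J (repH I i0 L) (repw w i0 \<beta>) (reph h i0 \<gamma>) \<longleftrightarrow>
      (\<forall>u. ?F u = 0) \<or> (\<forall>l\<in>L. 0 < \<gamma> l)" if "type1_min ap am x y K J I w h"
  proof -
    have "\<forall>i\<in>I. \<not> escape ap am x y K J I w h i"
      using that unfolding type1_min_def by blast
    then have "(\<forall>i\<in>repH I i0 L. \<not> escape ap am x y K J (repH I i0 L) (repw w i0 \<beta>) (reph h i0 \<gamma>) i)
        \<longleftrightarrow> (\<forall>u. ?F u = 0) \<or> (\<forall>l\<in>L. \<gamma> l \<noteq> 0)"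
      by (rule no_escape_replicate_iff[OF replication assms(4,3,10)])
    moreover have "(\<forall>l\<in>L. 0 < \<gamma> l) \<longleftrightarrow> (\<forall>l\<in>L. 0 \<le> \<gamma> l) \<and> (\<forall>l\<in>L. \<gamma> l \<noteq> 0)"
      by force
    ultimately show ?thesis
      using stationary_iff type1_min_iff_no_escape[OF finite_repH[OF assms(2,6)] assms(4,3)] by blast
  qed
  then show ?thesis
    using tangential_iff stationary_iff by blast
qed

end
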